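(* Assume $L$ satisfies (L1),(L2) and $W$ satisfies (W1)–(W6) (as in the context). Then there exist numbers $r_k>0$ and $\overline b_k$ ($k\in\mathbb{N}$) with $\overline b_k\to+\infty$ as $k\to\infty$ such that $b_k(\lambda):=\inf_{u\in Z_k,\ \|u\|=r_k}I_\lambda(u)\ge\overline b_k$ for all $\lambda\in[1,2]$.
   Context: $L\in C(\mathbb{R},\mathbb{R}^{N\times N})$ symmetric-matrix valued, $W\in C^1(\mathbb{R}\times\mathbb{R}^N,\mathbb{R})$, $\nabla W$ the gradient in $x$, $\widetilde W(t,x)=2W(t,x)-(\nabla W(t,x),x)$, $l(t)=\min_{|x|=1}(L(t)x,x)$. (L1): $\exists\,\alpha>1,M>0$ with $\lim_{R\to\infty}\operatorname{meas}\{t:|t|\ge R,\ l(t)\le M|t|\ln^\alpha|t|\}=0$. (L2): $\exists L_0>0$ with $(L(t)x,x)\ge-L_0|x|^2$. $\mathcal{H}$ is the self-adjoint extension in $L^2(\mathbb{R},\mathbb{R}^N)$ of $-\frac{d^2}{dt^2}+L(t)$, with eigenvalues $\lambda_1\le\lambda_2\le\cdots\to\infty$ and eigenfunctions $e_j$ forming an orthogonal basis; $\bar n$ is the number of nonpositive eigenvalues. $E=\mathfrak{D}(|\mathcal{H}|^{1/2})$, $E=E^-\oplus E^0\oplus E^+$ (spans of eigenfunctions with negative, zero, positive eigenvalues), norm $\|u\|^2=\||\mathcal{H}|^{1/2}u\|_{L^2}^2+\|u^0\|_{L^2}^2$. $X_j=\operatorname{span}\{e_j\}$, $Z_k=\overline{\bigoplus_{j\ge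 k}X_j}$ (closure in $E$). For $\lambda\in[1,2]$: $T(u)=\frac12\|u^+\|^2$, $P(u)=\frac12\|u^-\|^2+\int_{\mathbb{R}}W(t,u(t))dt$, $I_\lambda=T-\lambda P$. (W1) $W(t,0)=0$, $|\nabla W(t,x)|\le b_1|x|$. (W2) $\widetilde W(t,x)\ge b_2|x|^\mu$ for $|x|\ge r_1$, with $b_2,r_1>0,\mu>1$. (W3) $\widetilde W(t,x)\ge-b_3|x|$ for $|x|<r_1$, $b_3>0$. (W4) $|W(t,x)|\le\frac{\lambda_{\bar n+1}-\sigma_0}{2}|x|^2$ for $|x|\le r_2$, $r_2,\sigma_0>0$. (W5) $W(t,x)\ge(\frac{\lambda_{\bar n+1}}2+\varepsilon_0)|x|^2$ for $|x|\ge r_\infty$, $\varepsilon_0,r_\infty>0$. (W6) $W\ge0$. All for all $t\in\mathbb{R}$. *)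

theory Defs
  imports "HOL-Analysis.Analysis"
begin

definition L2fun :: "(real \<Rightarrow> real^'n) \<Rightarrow> bool" where
  "L2fun u \<longleftrightarrow> u \<in> borel_measurable lebesgue \<and>
     integrable lebesgue (\<lambda>t. (norm (u t))\<^sup>2)"

definition innerL2 :: "(real \<Rightarrow> real^'n) \<Rightarrow> (real \<Rightarrow> real^'n) \<Rightarrow> real" where
  "innerL2 u v = (\<integral>t. u t \<bullet> v t \<partial>lebesgue)"

definition lmin :: "(real \<Rightarrow> real^'n^'n) \<Rightarrow> real \<Rightarrow> real" where
  "lmin L t = Inf {(L t *v x) \<bullet> x | x. norm x = 1}"

definition test_fun :: "(real \<Rightarrow> real^'n) \<Rightarrow> (real \<Rightarrow> real^'n) \<Rightarrow> bool" where
  "test_fun phi phi2 \<longleftrightarrow> (\<exists>phi1.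
     (\<forall>t. (phi has_vector_derivative phi1 t) (at t)) \<and>
     (\<forall>t. (phi1 has_vector_derivative phi2 t) (at t)) \<and>
     continuous_on UNIV phi2 \<and> (\<exists>R. \<forall>t. R < \<bar>t\<bar> \<longrightarrow> phi t = 0))"

text \<open>f is an eigenfunction of the self-adjoint realisation of H with eigenvalue mu:
  H^* f = mu f in the sense of distributions (H is essentially self-adjoint on test functions).\<close>
definition eigenfun :: "(real \<Rightarrow> real^'n^'n) \<Rightarrow> real \<Rightarrow> (real \<Rightarrow> real^'n) \<Rightarrow> bool" where
  "eigenfun L mu f \<longleftrightarrow> L2fun f \<and>
     (\<forall>phi phi2. test_fun phi phi2 \<longrightarrow>
        (\<integral>t. f t \<bullet> (L t *v phi t - phi2 t) \<partial>lebesgue) = mu * innerL2 f phi)"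

text \<open>Eigenvalues eig 1 \<le> eig 2 \<le> ... \<rightarrow> \<infinity> (indexed from 1) with eigenfunctions e j
  forming an orthogonal basis of L^2.\<close>
definition spectral_basis :: "(real \<Rightarrow> real^'n^'n) \<Rightarrow> (nat \<Rightarrow> real) \<Rightarrow> (nat \<Rightarrow> real \<Rightarrow> real^'n) \<Rightarrow> bool" where
  "spectral_basis L eig e \<longleftrightarrow>
     (\<forall>j\<ge>1. eigenfun L (eig j) (e j) \<and> innerL2 (e j) (e j) > 0) \<and>
     (\<forall>i\<ge>1. \<forall>j\<ge>1. i \<noteq> j \<longrightarrow> innerL2 (e i) (e j) = 0) \<and>
     (\<forall>u. L2fun u \<longrightarrow> (\<forall>j\<ge>1. innerL2 u (e j) = 0) \<longrightarrow> innerL2 u u = 0) \<and>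
     (\<forall>i j. 1 \<le> i \<longrightarrow> i \<le> j \<longrightarrow> eig i \<le> eig j) \<and>
     filterlim eig at_top sequentially"

definition nbar :: "(nat \<Rightarrow> real) \<Rightarrow> nat" where
  "nbar eig = card {j. 1 \<le> j \<and> eig j \<le> 0}"

section \<open>The space E = D(|H|^(1/2)) via the eigen-expansion\<close>

definition coef2 :: "(nat \<Rightarrow> real \<Rightarrow> real^'n) \<Rightarrow> (real \<Rightarrow> real^'n) \<Rightarrow> nat \<Rightarrow> real" where
  "coef2 e u j = (innerL2 u (e j))\<^sup>2 / innerL2 (e j) (e j)"

definition Espace :: "(nat \<Rightarrow> real) \<Rightarrow> (nat \<Rightarrow> real \<Rightarrow> real^'n) \<Rightarrow> (real \<Rightarrow> real^'n) set" where
  "Espace eig e = {u. L2fun u \<and> summable (\<lambda>j. \<bar>eig (Suc j)\<bar> * coef2 e u (Suc j))}"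

text \<open>norm^2 = ||H|^(1/2) u|^2_{L2} + |u^0|^2_{L2}\<close>
definition Enorm :: "(nat \<Rightarrow> real) \<Rightarrow> (nat \<Rightarrow> real \<Rightarrow> real^'n) \<Rightarrow> (real \<Rightarrow> real^'n) \<Rightarrow> real" where
  "Enorm eig e u = sqrt (\<Sum>j. (\<bar>eig (Suc j)\<bar> + (if eig (Suc j) = 0 then 1 else 0)) * coef2 e u (Suc j))"

text \<open>|u^+|^2 and |u^-|^2 (E-norms of the projections onto E^+ and E^-).\<close>
definition normsq_plus :: "(nat \<Rightarrow> real) \<Rightarrow> (nat \<Rightarrow> real \<Rightarrow> real^'n) \<Rightarrow> (real \<Rightarrow> real^'n) \<Rightarrow> real" where
  "normsq_plus eig e u = (\<Sum>j. (if eig (Suc j) > 0 then eig (Suc j) else 0) * coef2 e u (Suc j))"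

definition normsq_minus :: "(nat \<Rightarrow> real) \<Rightarrow> (nat \<Rightarrow> real \<Rightarrow> real^'n) \<Rightarrow> (real \<Rightarrow> real^'n) \<Rightarrow> real" where
  "normsq_minus eig e u = (\<Sum>j. (if eig (Suc j) < 0 then - eig (Suc j) else 0) * coef2 e u (Suc j))"

text \<open>Z_k = closure in E of the span of e_j, j \<ge> k.\<close>
definition Zk :: "(nat \<Rightarrow> real) \<Rightarrow> (nat \<Rightarrow> real \<Rightarrow> real^'n) \<Rightarrow> nat \<Rightarrow> (real \<Rightarrow> real^'n) set" where
  "Zk eig e k = {u \<in> Espace eig e. \<forall>\<epsilon>>0. \<exists>F c. finite F \<and> F \<subseteq> {k..} \<and>
      Enorm eig e (\<lambda>t. u t - (\<Sum>j\<in>F. c j *\<^sub>R e j t)) < \<epsilon>}"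

definition Ifun :: "(nat \<Rightarrow> real) \<Rightarrow> (nat \<Rightarrow> real \<Rightarrow> real^'n) \<Rightarrow> (real \<Rightarrow> real^'n \<Rightarrow> real)
     \<Rightarrow> real \<Rightarrow> (real \<Rightarrow> real^'n) \<Rightarrow> real" where
  "Ifun eig e W lam u = normsq_plus eig e u / 2
      - lam * (normsq_minus eig e u / 2 + (\<integral>t. W t (u t) \<partial>lebesgue))"

definition bk :: "(nat \<Rightarrow> real) \<Rightarrow> (nat \<Rightarrow> real \<Rightarrow> real^'n) \<Rightarrow> (real \<Rightarrow> real^'n \<Rightarrow> real)
     \<Rightarrow> nat \<Rightarrow> real \<Rightarrow> real \<Rightarrow> ereal" where
  "bk eig e W k r lam = (INF u \<in> {u \<in> Zk eig e k. Enorm eig e u = r}. ereal (Ifun eig e W lam u))"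

end

theory Submission
  imports Defs
begin

(* On Z_k the coefficients of u along e_1, ..., e_(k-1) vanish.  As soon as lambda_k > 0
   this forces u^- = u^0 = 0, so T(u) = ||u||^2/2, and Parseval's identity gives
   |u|_(L^2)^2 <= ||u||^2 / lambda_k.  Since W >= 0 and W(t,x) <= B |x|^2 (mean value theorem,
   from W(t,0) = 0 and |grad W(t,x)| <= b_1 |x|), for lambda in [1,2]
     I_lambda(u) >= ||u||^2/2 - 2 B ||u||^2 / lambda_k >= ||u||^2/4   once lambda_k > 8 B,
   so r_k = k + 1 and bbar_k = r_k^2/4 work for all large k.  For the finitely many other k a
   crude bound suffices, because the weights of the E-norm are bounded below by a positive
   constant.  Only W(t,0) = 0, the gradient bound of (W1) and (W6) are used.
   Parseval's identity rests on the completeness of L^2 (Riesz-Fischer), obtained from a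
   rapidly Cauchy subsequence, almost everywhere convergence and Fatou's lemma. *)

lemma norm_add_sq_le:
  fixes a b :: "'a::real_normed_vector"
  shows "(norm (a + b))\<^sup>2 \<le> 2 * (norm a)\<^sup>2 + 2 * (norm b)\<^sup>2"
proof -
  have "(norm (a + b))\<^sup>2 \<le> (norm a + norm b)\<^sup>2"
    by (simp add: norm_triangle_ineq power_mono)
  also have "\<dots> \<le> 2 * (norm a)\<^sup>2 + 2 * (norm b)\<^sup>2"
    using sum_squares_bound[of "norm a" "norm b"] by (simp add: power2_sum)
  finally show ?thesis .
qed

definition normsqL2 :: "(real \<Rightarrow> real^'n) \<Rightarrow> real" where
  "normsqL2 u = (\<integral>t. (norm (u t))\<^sup>2 \<partial>lebesgue)"

lemma L2fun_measurable: "L2fun u \<Longrightarrow> u \<in> borel_measurable lebesgue"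
  by (simp add: L2fun_def)

lemma L2fun_integrable_normsq: "L2fun u \<Longrightarrow> integrable lebesgue (\<lambda>t. (norm (u t))\<^sup>2)"
  by (simp add: L2fun_def)

lemma normsqL2_nonneg: "0 \<le> normsqL2 u"
  unfolding normsqL2_def by (rule integral_nonneg_AE) auto

lemma innerL2_self: "innerL2 u u = normsqL2 u"
  unfolding innerL2_def normsqL2_def by (simp add: power2_norm_eq_inner)

lemma innerL2_commute: "innerL2 u v = innerL2 v u"
  unfolding innerL2_def by (simp add: inner_commute)

lemma normsqL2_minus_commute: "normsqL2 (\<lambda>t. u t - v t) = normsqL2 (\<lambda>t. v t - u t)"
  unfolding normsqL2_def by (simp add: norm_minus_commute)

lemma normsqL2_scaleR: "normsqL2 (\<lambda>t. c *\<^sub>R u t) = c\<^sup>2 * normsqL2 u"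
  unfolding normsqL2_def by (simp add: power_mult_distrib)

lemma L2fun_zero: "L2fun (\<lambda>t. 0)"
  unfolding L2fun_def by simp

lemma L2fun_add:
  assumes "L2fun u" "L2fun v"
  shows "L2fun (\<lambda>t. u t + v t)"
proof -
  have [measurable]: "u \<in> borel_measurable lebesgue" "v \<in> borel_measurable lebesgue"
    using assms by (auto simp: L2fun_measurable)
  have "integrable lebesgue (\<lambda>t. (norm (u t + v t))\<^sup>2)"
  proof (rule Bochner_Integration.integrable_bound)
    show "integrable lebesgue (\<lambda>t. 2 * (norm (u t))\<^sup>2 + 2 * (norm (v t))\<^sup>2)"
      using assms by (intro Bochner_Integration.integrable_add integrable_mult_right
          L2fun_integrable_normsq)
    show "AE t in lebesgue. norm ((norm (u t + v t))\<^sup>2)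
        \<le> norm (2 * (norm (u t))\<^sup>2 + 2 * (norm (v t))\<^sup>2)"
      by (simp add: norm_add_sq_le)
  qed measurable
  then show ?thesis unfolding L2fun_def by auto
qed

lemma L2fun_scaleR: "L2fun u \<Longrightarrow> L2fun (\<lambda>t. c *\<^sub>R u t)"
  unfolding L2fun_def by (auto simp: power_mult_distrib)

lemma L2fun_diff: "L2fun u \<Longrightarrow> L2fun v \<Longrightarrow> L2fun (\<lambda>t. u t - v t)"
  using L2fun_add[of u "\<lambda>t. (-1) *\<^sub>R v t"] L2fun_scaleR[of v "-1"] by simp

lemma L2fun_sum:
  "finite F \<Longrightarrow> (\<And>j. j \<in> F \<Longrightarrow> L2fun (e j)) \<Longrightarrow>
    L2fun (\<lambda>t. \<Sum>j\<in>F. c j *\<^sub>R e j t)"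
  by (induction F rule: finite_induct) (simp_all add: L2fun_zero L2fun_add L2fun_scaleR)

lemma integrable_innerL2:
  assumes "L2fun u" "L2fun v"
  shows "integrable lebesgue (\<lambda>t. u t \<bullet> v t)"
proof (rule Bochner_Integration.integrable_bound)
  show "integrable lebesgue (\<lambda>t. (norm (u t))\<^sup>2 + (norm (v t))\<^sup>2)"
    using assms by (intro Bochner_Integration.integrable_add L2fun_integrable_normsq)
  have [measurable]: "u \<in> borel_measurable lebesgue" "v \<in> borel_measurable lebesgue"
    using assms by (auto simp: L2fun_measurable)
  show "(\<lambda>t. u t \<bullet> v t) \<in> borel_measurable lebesgue" by measurable
  have "\<bar>a \<bullet> b\<bar> \<le> (norm a)\<^sup>2 + (norm b)\<^sup>2" for a b :: "real^'n"
    using Cauchy_Schwarz_ineq2[of a b] sum_squares_bound[of "norm a" "norm b"]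
      mult_nonneg_nonneg[OF norm_ge_zero norm_ge_zero, of a b] by linarith
  then show "AE t in lebesgue. norm (u t \<bullet> v t) \<le> norm ((norm (u t))\<^sup>2 + (norm (v t))\<^sup>2)"
    by (intro AE_I2) simp
qed

lemma innerL2_diff_left:
  assumes "L2fun u" "L2fun v" "L2fun w"
  shows "innerL2 (\<lambda>t. u t - v t) w = innerL2 u w - innerL2 v w"
  unfolding innerL2_def inner_diff_left
  by (rule Bochner_Integration.integral_diff[OF integrable_innerL2 integrable_innerL2])
    (use assms in auto)

lemma innerL2_sum_left:
  assumes "finite F" "\<And>j. j \<in> F \<Longrightarrow> L2fun (e j)" "L2fun w"
  shows "innerL2 (\<lambda>t. \<Sum>j\<in>F. c j *\<^sub>R e j t) w = (\<Sum>j\<in>F. c j * innerL2 (e j) w)"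
  unfolding innerL2_def inner_sum_left inner_scaleR_left
  using assms
  by (subst Bochner_Integration.integral_sum) (auto intro: integrable_innerL2)

lemma normsqL2_diff:
  assumes "L2fun u" "L2fun v"
  shows "normsqL2 (\<lambda>t. u t - v t) = normsqL2 u - 2 * innerL2 u v + normsqL2 v"
  using assms innerL2_diff_left[OF assms L2fun_diff[OF assms]]
    innerL2_diff_left[OF assms(1,2,1)] innerL2_diff_left[OF assms(1,2,2)]
  by (simp add: innerL2_self innerL2_commute[of _ "\<lambda>t. u t - v t"] innerL2_commute[of v u])

lemma normsqL2_diff_le:
  assumes "L2fun u" "L2fun v" "L2fun w"
  shows "normsqL2 (\<lambda>t. u t - w t) \<le> 2 * normsqL2 (\<lambda>t. u t - v t) + 2 * normsqL2 (\<lambda>t. v t - w t)"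
proof -
  have int: "integrable lebesgue (\<lambda>t. (norm (u t - v t))\<^sup>2)"
    "integrable lebesgue (\<lambda>t. (norm (v t - w t))\<^sup>2)"
    "integrable lebesgue (\<lambda>t. (norm (u t - w t))\<^sup>2)"
    using assms by (auto intro!: L2fun_integrable_normsq L2fun_diff)
  have "normsqL2 (\<lambda>t. u t - w t)
      \<le> (\<integral>t. 2 * (norm (u t - v t))\<^sup>2 + 2 * (norm (v t - w t))\<^sup>2 \<partial>lebesgue)"
    unfolding normsqL2_def
    using norm_add_sq_le[of "u t - v t" "v t - w t" for t] by (intro integral_mono) (use int in auto)
  also have "\<dots> = 2 * normsqL2 (\<lambda>t. u t - v t) + 2 * normsqL2 (\<lambda>t. v t - w t)"
    using int by (simp add: normsqL2_def)
  finally show ?thesis .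
qed

lemma innerL2_Cauchy_Schwarz:
  assumes "L2fun u" "L2fun v"
  shows "(innerL2 u v)\<^sup>2 \<le> normsqL2 u * normsqL2 v"
proof -
  have quadratic_nonneg: "0 \<le> normsqL2 u - 2 * s * innerL2 u v + s\<^sup>2 * normsqL2 v" for s
    using normsqL2_nonneg[of "\<lambda>t. u t - s *\<^sub>R v t"] assms
    by (simp add: normsqL2_diff L2fun_scaleR normsqL2_scaleR innerL2_commute[of u]
        innerL2_def mult.assoc)
  show ?thesis
  proof (cases "normsqL2 v = 0")
    case True
    have "innerL2 u v = 0"
    proof (rule ccontr)
      assume "innerL2 u v \<noteq> 0"
      then show False
        using quadratic_nonneg[of "(normsqL2 u + 1) / (2 * innerL2 u v)"] True
        by (simp add: field_simps)
    qed
    then show ?thesis using True by simp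
  next
    case False
    then have pos: "normsqL2 v > 0" using normsqL2_nonneg[of v] by simp
    show ?thesis
      using quadratic_nonneg[of "innerL2 u v / normsqL2 v"] pos
      by (simp add: field_simps power2_eq_square)
  qed
qed

lemma innerL2_eq_0_if_limit:
  assumes L2: "\<And>n. L2fun (f n)" "L2fun g" "L2fun v"
    and lim: "(\<lambda>n. normsqL2 (\<lambda>t. f n t - g t)) \<longlonglongrightarrow> 0"
    and orth: "\<forall>\<^sub>F n in sequentially. innerL2 (f n) v = 0"
  shows "innerL2 g v = 0"
proof -
  have "\<forall>\<^sub>F n in sequentially. (innerL2 g v)\<^sup>2 \<le> normsqL2 (\<lambda>t. f n t - g t) * normsqL2 v"
    using orth
  proof eventually_elim
    case (elim n)
    have "innerL2 (\<lambda>t. f n t - g t) v = - innerL2 g v"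
      using innerL2_diff_left[OF L2(1) L2(2) L2(3)] elim by simp
    then show ?case
      using innerL2_Cauchy_Schwarz[OF L2fun_diff[OF L2(1)[of n] L2(2)] L2(3)] by simp
  qed
  moreover have "(\<lambda>n. normsqL2 (\<lambda>t. f n t - g t) * normsqL2 v) \<longlonglongrightarrow> 0 * normsqL2 v"
    by (intro tendsto_mult lim tendsto_const)
  ultimately have "(innerL2 g v)\<^sup>2 \<le> 0"
    using tendsto_le[OF sequentially_bot _ tendsto_const] by fastforce
  then show ?thesis by simp
qed

section \<open>Completeness of L2\<close>

lemma le_add_square_divide:
  fixes x c :: real
  assumes "0 < c"
  shows "x \<le> c + x\<^sup>2 / c"
proof -
  have "0 \<le> (x - c / 2)\<^sup>2 + 3 / 4 * c\<^sup>2"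
    by simp
  then have "x * c \<le> c\<^sup>2 + x\<^sup>2"
    by (simp add: power2_eq_square algebra_simps)
  then show ?thesis using assms by (simp add: field_simps power2_eq_square)
qed

lemma convergent_if_summable_norm_diff:
  fixes h :: "nat \<Rightarrow> 'a::banach"
  assumes "summable (\<lambda>i. norm (h (Suc i) - h i))"
  shows "convergent h"
proof -
  have "summable (\<lambda>i. h (Suc i) - h i)"
    using assms by (rule summable_norm_cancel)
  then have "(\<lambda>n. h 0 + (\<Sum>i<n. h (Suc i) - h i)) \<longlonglongrightarrow> h 0 + (\<Sum>i. h (Suc i) - h i)"
    by (intro tendsto_add tendsto_const summable_LIMSEQ)
  then show ?thesis
    unfolding sum_lessThan_telescope convergent_def by auto
qed

lemma Cauchy_rapid_subseq:
  fixes d :: "nat \<Rightarrow> nat \<Rightarrow> real"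
  assumes "\<And>\<epsilon>. \<epsilon> > 0 \<Longrightarrow> \<exists>N. \<forall>m\<ge>N. \<forall>n\<ge>N. d m n < \<epsilon>" and "\<And>i. \<delta> i > 0"
  obtains r :: "nat \<Rightarrow> nat"
  where "mono r" "\<And>i m n. r i \<le> m \<Longrightarrow> r i \<le> n \<Longrightarrow> d m n < \<delta> i"
proof -
  have "\<forall>i. \<exists>N. \<forall>m\<ge>N. \<forall>n\<ge>N. d m n < \<delta> i"
    using assms by blast
  from choice[OF this]
  obtain N where N: "\<And>i m n. N i \<le> m \<Longrightarrow> N i \<le> n \<Longrightarrow> d m n < \<delta> i"
    by blast
  define r where "r i = (\<Sum>j\<le>i. N j)" for i
  have "mono r"
    unfolding r_def by (intro monoI sum_mono2) auto
  moreover have "N i \<le> r i" for i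
    unfolding r_def by (rule member_le_sum) auto
  ultimately show ?thesis
    using N that by (meson order_trans)
qed

lemma AE_summable_if_summable_integrals:
  fixes D :: "nat \<Rightarrow> 'a \<Rightarrow> real"
  assumes [measurable]: "\<And>i. D i \<in> borel_measurable M"
    and nonneg: "\<And>i x. 0 \<le> D i x"
    and integrable: "\<And>i. integrable M (D i)"
    and summable: "summable (\<lambda>i. \<integral>x. D i x \<partial>M)"
  shows "AE x in M. summable (\<lambda>i. D i x)"
proof -
  have "(\<integral>\<^sup>+x. (\<Sum>i. ennreal (D i x)) \<partial>M) = (\<Sum>i. \<integral>\<^sup>+x. ennreal (D i x) \<partial>M)"
    by (rule nn_integral_suminf) measurable
  also have "\<dots> = (\<Sum>i. ennreal (\<integral>x. D i x \<partial>M))"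
    using integrable nonneg by (simp add: nn_integral_eq_integral)
  also have "\<dots> \<noteq> \<infinity>"
    using summable nonneg by (simp add: ennreal_suminf_neq_top integral_nonneg)
  finally have "AE x in M. (\<Sum>i. ennreal (D i x)) \<noteq> \<infinity>"
    by (intro nn_integral_PInf_AE) measurable
  then show ?thesis
    by eventually_elim (rule summable_suminf_not_top[OF nonneg], simp add: infinity_ennreal_def)
qed

lemma AE_convergent_if_rapid_L2:
  assumes L2: "\<And>i. L2fun (h i)"
    and rapid: "\<And>i. normsqL2 (\<lambda>t. h (Suc i) t - h i t) \<le> (1/8)^i"
  shows "AE t in lebesgue. convergent (\<lambda>i. h i t)"
proof -
  (* The weights 2^i keep the integrals summable, and x \<le> 2^-i + 2^i x^2 turns pointwise
     summability of D into absolute convergence of the increments. *)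
  define D where "D i t = 2^i * (norm (h (Suc i) t - h i t))\<^sup>2" for i t
  have L2_diff: "L2fun (\<lambda>t. h (Suc i) t - h i t)" for i
    by (intro L2fun_diff L2)
  have [measurable]: "h i \<in> borel_measurable lebesgue" for i
    using L2 by (rule L2fun_measurable)
  have "AE t in lebesgue. summable (\<lambda>i. D i t)"
  proof (rule AE_summable_if_summable_integrals)
    show "D i \<in> borel_measurable lebesgue" for i
      unfolding D_def by measurable
    show "integrable lebesgue (D i)" for i
      unfolding D_def using L2_diff by (intro integrable_mult_right L2fun_integrable_normsq)
    have "(\<integral>t. D i t \<partial>lebesgue) \<le> (1/4)^i" for i
    proof -
      have "(\<integral>t. D i t \<partial>lebesgue) = 2^i * normsqL2 (\<lambda>t. h (Suc i) t - h i t)"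
        unfolding D_def normsqL2_def by simp
      also have "\<dots> \<le> 2^i * (1/8)^i"
        using rapid by (intro mult_left_mono) auto
      also have "\<dots> \<le> (1/4)^i"
        by (simp add: power_mult_distrib[symmetric])
      finally show ?thesis .
    qed
    then show "summable (\<lambda>i. \<integral>t. D i t \<partial>lebesgue)"
      by (intro summable_comparison_test[OF _ summable_geometric[of "1/4"]])
        (auto simp: D_def intro!: integral_nonneg_AE)
  qed (simp add: D_def)
  then show ?thesis
  proof eventually_elim
    case (elim t)
    have "norm (h (Suc i) t - h i t) \<le> (1/2)^i + D i t" for i
      using le_add_square_divide[of "(1/2)^i" "norm (h (Suc i) t - h i t)"]
      by (simp add: D_def power_one_over field_simps)
    then have "summable (\<lambda>i. norm (h (Suc i) t - h i t))"
      by (intro summable_comparison_test[OF _ summable_add[OF summable_geometric elim]]) auto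
    then show ?case
      by (rule convergent_if_summable_norm_diff)
  qed
qed

lemma L2fun_AE_limit:
  assumes L2: "\<And>m. L2fun (f m)" and [measurable]: "g \<in> borel_measurable lebesgue"
    and lim: "AE t in lebesgue. (\<lambda>m. f m t) \<longlonglongrightarrow> g t"
    and bound: "\<forall>\<^sub>F m in sequentially. normsqL2 (f m) \<le> c"
  shows "L2fun g \<and> normsqL2 g \<le> c"
proof -
  have [measurable]: "f m \<in> borel_measurable lebesgue" for m
    using L2 by (rule L2fun_measurable)
  have nn_f: "(\<integral>\<^sup>+t. ennreal ((norm (f m t))\<^sup>2) \<partial>lebesgue) = ennreal (normsqL2 (f m))" for m
    unfolding normsqL2_def using L2 by (intro nn_integral_eq_integral L2fun_integrable_normsq) auto
  have "(\<integral>\<^sup>+t. ennreal ((norm (g t))\<^sup>2) \<partial>lebesgue)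
      = (\<integral>\<^sup>+t. liminf (\<lambda>m. ennreal ((norm (f m t))\<^sup>2)) \<partial>lebesgue)"
    using lim
    by (intro nn_integral_cong_AE, eventually_elim)
      (intro lim_imp_Liminf[symmetric] tendsto_ennrealI tendsto_intros, auto)
  also have "\<dots> \<le> liminf (\<lambda>m. \<integral>\<^sup>+t. ennreal ((norm (f m t))\<^sup>2) \<partial>lebesgue)"
    by (rule nn_integral_liminf) measurable
  also have "\<dots> \<le> ennreal c"
    using bound unfolding nn_f
    by (intro Liminf_le) (auto elim!: eventually_mono intro: ennreal_leI)
  finally have le: "(\<integral>\<^sup>+t. ennreal ((norm (g t))\<^sup>2) \<partial>lebesgue) \<le> ennreal c" .
  then have int: "integrable lebesgue (\<lambda>t. (norm (g t))\<^sup>2)"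
    by (intro integrableI_bounded) (auto simp: le_less_trans)
  have "0 \<le> c"
    using bound normsqL2_nonneg eventually_happens'[OF sequentially_bot, of "\<lambda>m. normsqL2 (f m) \<le> c"]
    by (meson order_trans)
  then have "normsqL2 g \<le> c"
    using le unfolding normsqL2_def nn_integral_eq_integral[OF int AE_I2[OF zero_le_power2]]
    by simp
  with int show ?thesis unfolding L2fun_def by simp
qed

lemma L2_limit_of_rapid_Cauchy:
  assumes h_L2: "\<And>i. L2fun (h i)"
    and h_rapid: "\<And>i m. i \<le> m \<Longrightarrow> normsqL2 (\<lambda>t. h m t - h i t) \<le> (1/8)^i"
  obtains g where "L2fun g" "\<And>i. normsqL2 (\<lambda>t. g t - h i t) \<le> (1/8)^i"
proof -
  have [measurable]: "h i \<in> borel_measurable lebesgue" for i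
    using h_L2 by (rule L2fun_measurable)
  define g where "g t = lim (\<lambda>i. h i t)" for t
  have [measurable]: "g \<in> borel_measurable lebesgue"
    unfolding g_def by measurable
  have "AE t in lebesgue. convergent (\<lambda>i. h i t)"
    by (intro AE_convergent_if_rapid_L2 h_L2 h_rapid) simp
  then have h_lim: "AE t in lebesgue. (\<lambda>i. h i t) \<longlonglongrightarrow> g t"
    by eventually_elim (simp add: g_def convergent_LIMSEQ_iff)
  have g_close: "L2fun (\<lambda>t. g t - h i t) \<and> normsqL2 (\<lambda>t. g t - h i t) \<le> (1/8)^i" for i
  proof (rule L2fun_AE_limit[where f = "\<lambda>m t. h m t - h i t"])
    show "L2fun (\<lambda>t. h m t - h i t)" for m
      by (intro L2fun_diff h_L2)
    show "AE t in lebesgue. (\<lambda>m. h m t - h i t) \<longlonglongrightarrow> g t - h i t"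
      using h_lim by eventually_elim (intro tendsto_diff tendsto_const)
    show "\<forall>\<^sub>F m in sequentially. normsqL2 (\<lambda>t. h m t - h i t) \<le> (1/8)^i"
      using h_rapid by (intro eventually_sequentiallyI[of i])
  qed measurable
  moreover have "L2fun g"
    using L2fun_add[OF conjunct1[OF g_close[of 0]] h_L2[of 0]] by simp
  ultimately show ?thesis
    using that by blast
qed

lemma L2fun_complete:
  assumes L2: "\<And>n. L2fun (f n)"
    and Cauchy: "\<And>\<epsilon>. \<epsilon> > 0 \<Longrightarrow> \<exists>N. \<forall>m\<ge>N. \<forall>n\<ge>N. normsqL2 (\<lambda>t. f m t - f n t) < \<epsilon>"
  shows "\<exists>g. L2fun g \<and> (\<lambda>n. normsqL2 (\<lambda>t. f n t - g t)) \<longlonglongrightarrow> 0"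
proof -
  obtain r where "mono r"
    and r: "\<And>i m n. r i \<le> m \<Longrightarrow> r i \<le> n \<Longrightarrow> normsqL2 (\<lambda>t. f m t - f n t) < (1/8)^i"
    using Cauchy_rapid_subseq[OF Cauchy, of "\<lambda>i. (1/8)^i"] by auto
  have "normsqL2 (\<lambda>t. f (r m) t - f (r i) t) \<le> (1/8)^i" if "i \<le> m" for i m
    using r[of i "r m" "r i"] monoD[OF \<open>mono r\<close> that] by simp
  then obtain g where g_L2: "L2fun g" and g_close: "\<And>i. normsqL2 (\<lambda>t. g t - f (r i) t) \<le> (1/8)^i"
    using L2_limit_of_rapid_Cauchy[of "\<lambda>i. f (r i)"] L2 by blast
  have f_close: "normsqL2 (\<lambda>t. f n t - g t) \<le> 4 * (1/8)^i" if "r i \<le> n" for i n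
  proof -
    have "normsqL2 (\<lambda>t. f n t - g t)
        \<le> 2 * normsqL2 (\<lambda>t. f n t - f (r i) t) + 2 * normsqL2 (\<lambda>t. f (r i) t - g t)"
      by (rule normsqL2_diff_le[OF L2 L2 g_L2])
    also have "\<dots> \<le> 2 * (1/8)^i + 2 * (1/8)^i"
      using r[OF that order_refl] g_close[of i]
      by (intro add_mono) (auto simp: normsqL2_minus_commute)
    finally show ?thesis by simp
  qed
  have "(\<lambda>n. normsqL2 (\<lambda>t. f n t - g t)) \<longlonglongrightarrow> 0"
  proof (rule LIMSEQ_I)
    fix \<epsilon> :: real assume "0 < \<epsilon>"
    then obtain i where i: "(1/8::real)^i < \<epsilon> / 4"
      using real_arch_pow_inv[of "\<epsilon>/4" "1/8"] by auto
    have "norm (normsqL2 (\<lambda>t. f n t - g t) - 0) < \<epsilon>" if "r i \<le> n" for n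
      using f_close[OF that] i normsqL2_nonneg[of "\<lambda>t. f n t - g t"] by simp
    then show "\<exists>N. \<forall>n\<ge>N. norm (normsqL2 (\<lambda>t. f n t - g t) - 0) < \<epsilon>"
      by blast
  qed
  with g_L2 show ?thesis by blast
qed

section \<open>Complete orthogonal systems and Parseval's identity\<close>

locale complete_orthogonal_system =
  fixes e :: "nat \<Rightarrow> real \<Rightarrow> real^'n"
  assumes L2fun_basis: "\<And>j. j \<ge> 1 \<Longrightarrow> L2fun (e j)"
    and normsqL2_basis_pos: "\<And>j. j \<ge> 1 \<Longrightarrow> innerL2 (e j) (e j) > 0"
    and orthogonal: "\<And>i j. i \<ge> 1 \<Longrightarrow> j \<ge> 1 \<Longrightarrow> i \<noteq> j \<Longrightarrow> innerL2 (e i) (e j) = 0"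
    and complete: "\<And>u. L2fun u \<Longrightarrow> (\<forall>j\<ge>1. innerL2 u (e j) = 0) \<Longrightarrow> innerL2 u u = 0"
begin

lemma L2fun_span:
  assumes "finite F" "F \<subseteq> {1..}"
  shows "L2fun (\<lambda>t. \<Sum>j\<in>F. c j *\<^sub>R e j t)"
  using assms by (intro L2fun_sum L2fun_basis) auto

lemma innerL2_span_basis:
  assumes "finite F" "F \<subseteq> {1..}" "i \<ge> 1"
  shows "innerL2 (\<lambda>t. \<Sum>j\<in>F. c j *\<^sub>R e j t) (e i)
    = (if i \<in> F then c i * innerL2 (e i) (e i) else 0)"
proof -
  have "innerL2 (\<lambda>t. \<Sum>j\<in>F. c j *\<^sub>R e j t) (e i) = (\<Sum>j\<in>F. c j * innerL2 (e j) (e i))"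
    using assms by (intro innerL2_sum_left L2fun_basis) auto
  also have "\<dots> = (\<Sum>j\<in>F. if j = i then c i * innerL2 (e i) (e i) else 0)"
    using assms orthogonal by (intro sum.cong) auto
  finally show ?thesis
    using assms(1) by simp
qed

lemma normsqL2_span:
  assumes "finite F" "F \<subseteq> {1..}"
  shows "normsqL2 (\<lambda>t. \<Sum>j\<in>F. c j *\<^sub>R e j t) = (\<Sum>j\<in>F. (c j)\<^sup>2 * innerL2 (e j) (e j))"
proof -
  let ?S = "\<lambda>t. \<Sum>j\<in>F. c j *\<^sub>R e j t"
  have "normsqL2 ?S = (\<Sum>j\<in>F. c j * innerL2 (e j) ?S)"
    unfolding innerL2_self[symmetric] using assms
    by (intro innerL2_sum_left L2fun_basis L2fun_span) auto
  also have "\<dots> = (\<Sum>j\<in>F. (c j)\<^sup>2 * innerL2 (e j) (e j))"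
  proof (intro sum.cong refl)
    fix j assume "j \<in> F"
    then show "c j * innerL2 (e j) ?S = (c j)\<^sup>2 * innerL2 (e j) (e j)"
      using assms innerL2_span_basis[OF assms, of j c] innerL2_commute[of "e j" ?S]
      by (auto simp: power2_eq_square)
  qed
  finally show ?thesis .
qed

lemma coef2_nonneg: "j \<ge> 1 \<Longrightarrow> 0 \<le> coef2 e u j"
  unfolding coef2_def using normsqL2_basis_pos[of j] by simp

definition fourier_coeff :: "(real \<Rightarrow> real^'n) \<Rightarrow> nat \<Rightarrow> real" where
  "fourier_coeff u j = innerL2 u (e j) / innerL2 (e j) (e j)"

definition partial_sum :: "(real \<Rightarrow> real^'n) \<Rightarrow> nat set \<Rightarrow> real \<Rightarrow> real^'n" where
  "partial_sum u F t = (\<Sum>j\<in>F. fourier_coeff u j *\<^sub>R e j t)"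

lemma normsqL2_partial_sum:
  assumes "finite F" "F \<subseteq> {1..}"
  shows "normsqL2 (partial_sum u F) = (\<Sum>j\<in>F. coef2 e u j)"
  unfolding partial_sum_def using assms normsqL2_basis_pos
  by (auto simp: normsqL2_span coef2_def fourier_coeff_def power2_eq_square intro!: sum.cong)

lemma innerL2_remainder_basis:
  assumes u: "L2fun u" and F: "finite F" "F \<subseteq> {1..}" and "j \<in> F"
  shows "innerL2 (\<lambda>t. u t - partial_sum u F t) (e j) = 0"
proof -
  have "j \<ge> 1" using assms by auto
  then show ?thesis
    unfolding partial_sum_def using assms normsqL2_basis_pos[of j]
    by (simp add: innerL2_diff_left L2fun_span L2fun_basis innerL2_span_basis fourier_coeff_def)
qed

lemma Bessel_identity:
  assumes u: "L2fun u" and F: "finite F" "F \<subseteq> {1..}"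
  shows "normsqL2 (\<lambda>t. u t - partial_sum u F t) = normsqL2 u - (\<Sum>j\<in>F. coef2 e u j)"
proof -
  let ?S = "partial_sum u F"
  have S: "L2fun ?S"
    unfolding partial_sum_def using F by (rule L2fun_span)
  have "innerL2 ?S (\<lambda>t. u t - ?S t)
      = (\<Sum>j\<in>F. fourier_coeff u j * innerL2 (e j) (\<lambda>t. u t - ?S t))"
    unfolding partial_sum_def[of u F] using F L2fun_diff[OF u S]
    by (intro innerL2_sum_left L2fun_basis) (auto simp: partial_sum_def)
  also have "\<dots> = 0"
    using innerL2_remainder_basis[OF u F] innerL2_commute[of "e _" "\<lambda>t. u t - ?S t"]
    by (intro sum.neutral) simp
  finally have "innerL2 u ?S = normsqL2 ?S"
    using innerL2_diff_left[OF u S S] by (simp add: innerL2_commute[of ?S] innerL2_self)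
  then show ?thesis
    using normsqL2_diff[OF u S] normsqL2_partial_sum[OF F] by simp
qed


lemma partial_sum_split:
  assumes "n \<le> m"
  shows "partial_sum u {1..m} t = partial_sum u {1..n} t + partial_sum u {Suc n..m} t"
proof -
  have "{1..m} = {1..n} \<union> {Suc n..m}" using assms by auto
  then show ?thesis
    unfolding partial_sum_def by (simp add: sum.union_disjoint)
qed

lemma L2_convergent_partial_sums:
  assumes u: "L2fun u"
  shows "\<exists>g. L2fun g \<and> (\<lambda>n. normsqL2 (\<lambda>t. partial_sum u {1..n} t - g t)) \<longlonglongrightarrow> 0"
proof (rule L2fun_complete)
  show S_L2: "L2fun (partial_sum u {1..n})" for n
    unfolding partial_sum_def by (rule L2fun_span) auto
  define P where "P n = (\<Sum>j\<in>{1..n}. coef2 e u j)" for n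
  have P_le: "P n \<le> normsqL2 u" for n
    using Bessel_identity[OF u, of "{1..n}"] normsqL2_nonneg[of "\<lambda>t. u t - partial_sum u {1..n} t"]
    by (simp add: P_def)
  have "mono P"
    unfolding P_def by (intro monoI sum_mono2) (auto intro: coef2_nonneg)
  moreover have "0 \<le> P n" for n
    unfolding P_def by (intro sum_nonneg coef2_nonneg) auto
  ultimately have "Cauchy P"
    using P_le by (intro convergent_Cauchy Bseq_mono_convergent BseqI'[of _ "normsqL2 u"])
      (auto simp: monoD)
  have S_diff: "normsqL2 (\<lambda>t. partial_sum u {1..m} t - partial_sum u {1..n} t) = \<bar>P m - P n\<bar>"
    if "n \<le> m" for m n
  proof -
    have "normsqL2 (\<lambda>t. partial_sum u {1..m} t - partial_sum u {1..n} t) = (\<Sum>j\<in>{Suc n..m}. coef2 e u j)"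
      using partial_sum_split[OF that] normsqL2_partial_sum[of "{Suc n..m}" u] by simp
    also have "\<dots> = P m - P n"
    proof -
      have "{1..m} = {1..n} \<union> {Suc n..m}" using that by auto
      then show ?thesis unfolding P_def by (simp add: sum.union_disjoint)
    qed
    finally show ?thesis using monoD[OF \<open>mono P\<close> that] by simp
  qed
  fix \<epsilon> :: real assume "0 < \<epsilon>"
  then obtain N where N: "\<And>m n. N \<le> m \<Longrightarrow> N \<le> n \<Longrightarrow> \<bar>P m - P n\<bar> < \<epsilon>"
    using CauchyD[OF \<open>Cauchy P\<close>] by (metis real_norm_def)
  show "\<exists>N. \<forall>m\<ge>N. \<forall>n\<ge>N.
    normsqL2 (\<lambda>t. partial_sum u {1..m} t - partial_sum u {1..n} t) < \<epsilon>"
  proof (intro exI allI impI)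
    fix m n assume "N \<le> m" "N \<le> n"
    then show "normsqL2 (\<lambda>t. partial_sum u {1..m} t - partial_sum u {1..n} t) < \<epsilon>"
      using N[of m n] S_diff[of n m] S_diff[of m n]
        normsqL2_minus_commute[of "partial_sum u {1..m}" "partial_sum u {1..n}"]
      by (cases "n \<le> m") (auto simp: abs_minus_commute)
  qed
qed

lemma Parseval:
  assumes u: "L2fun u"
  shows "(\<lambda>j. coef2 e u (Suc j)) sums normsqL2 u"
proof -
  define R where "R n = (\<lambda>t. u t - partial_sum u {1..n} t)" for n
  have R_L2: "L2fun (R n)" for n
    unfolding R_def partial_sum_def by (intro L2fun_diff u L2fun_span) auto
  obtain g where g: "L2fun g"
    and S_lim: "(\<lambda>n. normsqL2 (\<lambda>t. partial_sum u {1..n} t - g t)) \<longlonglongrightarrow> 0"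
    using L2_convergent_partial_sums[OF u] by blast
  have ug: "L2fun (\<lambda>t. u t - g t)"
    using u g by (rule L2fun_diff)
  have "normsqL2 (\<lambda>t. R n t - (u t - g t)) = normsqL2 (\<lambda>t. partial_sum u {1..n} t - g t)" for n
    using normsqL2_minus_commute[of g "partial_sum u {1..n}"] by (simp add: R_def)
  then have R_lim: "(\<lambda>n. normsqL2 (\<lambda>t. R n t - (u t - g t))) \<longlonglongrightarrow> 0"
    using S_lim by simp
  have "innerL2 (\<lambda>t. u t - g t) (e j) = 0" if "j \<ge> 1" for j
  proof (rule innerL2_eq_0_if_limit[OF R_L2 ug L2fun_basis[OF that] R_lim])
    show "\<forall>\<^sub>F n in sequentially. innerL2 (R n) (e j) = 0"
      unfolding R_def using that
      by (intro eventually_sequentiallyI[of j] innerL2_remainder_basis u) auto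
  qed
  then have "normsqL2 (\<lambda>t. u t - g t) = 0"
    using complete[OF ug] by (simp add: innerL2_self)
  then have R_le: "normsqL2 (R n) \<le> 2 * normsqL2 (\<lambda>t. R n t - (u t - g t))" for n
    using normsqL2_diff_le[OF R_L2[of n] ug L2fun_zero] by simp
  have "(\<lambda>n. normsqL2 (R n)) \<longlonglongrightarrow> 0"
  proof (rule tendsto_sandwich[of "\<lambda>_. 0" _ _ "\<lambda>n. 2 * normsqL2 (\<lambda>t. R n t - (u t - g t))"])
    show "(\<lambda>n. 2 * normsqL2 (\<lambda>t. R n t - (u t - g t))) \<longlonglongrightarrow> 0"
      using tendsto_mult_right_zero[OF R_lim] by simp
  qed (use R_le normsqL2_nonneg in \<open>auto intro: always_eventually\<close>)
  then have "(\<lambda>n. normsqL2 u - normsqL2 (R n)) \<longlonglongrightarrow> normsqL2 u - 0"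
    by (intro tendsto_diff tendsto_const)
  moreover have "normsqL2 u - normsqL2 (R n) = (\<Sum>j<n. coef2 e u (Suc j))" for n
    using Bessel_identity[OF u, of "{1..n}"] by (simp add: R_def sum.atLeast1_atMost_eq)
  ultimately show ?thesis
    unfolding sums_def by simp
qed

lemma coef2_diff_span:
  assumes u: "L2fun u" and F: "finite F" "F \<subseteq> {1..}" and j: "j \<ge> 1" "j \<notin> F"
  shows "coef2 e (\<lambda>t. u t - (\<Sum>i\<in>F. c i *\<^sub>R e i t)) j = coef2 e u j"
  unfolding coef2_def using assms
  by (simp add: innerL2_diff_left L2fun_span L2fun_basis innerL2_span_basis)

end

section \<open>A quadratic bound for the potential\<close>

lemma has_derivative_partial_snd:
  assumes "((\<lambda>p. f (fst p) (snd p)) has_derivative D) (at (t, x))"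
  shows "(f t has_derivative (\<lambda>h. D (0, h))) (at x)"
proof -
  have "((\<lambda>y. (t, y)) has_derivative (\<lambda>h. (0, h))) (at x)"
    by (intro has_derivative_Pair has_derivative_const has_derivative_ident)
  from has_derivative_compose[OF this assms] show ?thesis
    by simp
qed

lemma potential_le_quadratic:
  fixes V :: "'a::real_inner \<Rightarrow> real"
  assumes deriv: "\<And>x. (V has_derivative (\<lambda>h. G x \<bullet> h)) (at x)"
    and "V 0 = 0" and G_le: "\<And>x. norm (G x) \<le> b * norm x"
  shows "V x \<le> \<bar>b\<bar> * (norm x)\<^sup>2"
proof -
  have "((\<lambda>s. V (s *\<^sub>R x)) has_derivative (\<lambda>d. (G (s *\<^sub>R x) \<bullet> x) * d)) (at s)" for s
    using has_derivative_compose[OF has_derivative_scaleR_left[OF has_derivative_ident] deriv]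
    by (simp add: mult.commute)
  then have "((\<lambda>s. V (s *\<^sub>R x)) has_real_derivative G (s *\<^sub>R x) \<bullet> x) (at s)" for s
    by (simp add: has_field_derivative_def)
  then obtain z where z: "0 < z" "z < 1" and V_eq: "V x = G (z *\<^sub>R x) \<bullet> x"
    using MVT2[of 0 1 "\<lambda>s. V (s *\<^sub>R x)"] \<open>V 0 = 0\<close> by force
  note V_eq
  also have "\<dots> \<le> norm (G (z *\<^sub>R x)) * norm x"
    by (rule Cauchy_Schwarz_ineq2[THEN abs_le_D1])
  also have "\<dots> \<le> (\<bar>b\<bar> * norm x) * norm x"
  proof (intro mult_right_mono)
    have "b * (z * norm x) \<le> \<bar>b\<bar> * (1 * norm x)"
      using z by (intro mult_mono mult_right_mono) auto
    then show "norm (G (z *\<^sub>R x)) \<le> \<bar>b\<bar> * norm x"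
      using G_le[of "z *\<^sub>R x"] z by simp
  qed simp
  finally show ?thesis
    by (simp add: power2_eq_square mult.assoc)
qed

section \<open>The functional on the spectral subspaces\<close>

locale spectral_energy = complete_orthogonal_system e
  for e :: "nat \<Rightarrow> real \<Rightarrow> real^'n" +
  fixes eig :: "nat \<Rightarrow> real" and W :: "real \<Rightarrow> real^'n \<Rightarrow> real" and B :: real
  assumes eig_mono: "\<And>i j. 1 \<le> i \<Longrightarrow> i \<le> j \<Longrightarrow> eig i \<le> eig j"
    and eig_tendsto: "filterlim eig at_top sequentially"
    and W_nonneg: "\<And>t x. 0 \<le> W t x"
    and W_le: "\<And>t x. W t x \<le> B * (norm x)\<^sup>2"
    and B_nonneg: "0 \<le> B"
begin

definition Eweight :: "nat \<Rightarrow> real" where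
  "Eweight j = \<bar>eig j\<bar> + (if eig j = 0 then 1 else 0)"

lemma Eweight_pos: "0 < Eweight j"
  unfolding Eweight_def by auto

lemma Eweight_lower_bound: "\<exists>m>0. \<forall>j. m \<le> Eweight j"
proof -
  obtain N where N: "\<And>j. N \<le> j \<Longrightarrow> 1 \<le> eig j"
    using eig_tendsto unfolding filterlim_at_top eventually_sequentially by blast
  define m where "m = min 1 (Min (Eweight ` {..N}))"
  have "0 < Min (Eweight ` {..N})"
    using Eweight_pos by (subst Min_gr_iff) auto
  then have "0 < m"
    unfolding m_def by simp
  moreover have "m \<le> Eweight j" for j
  proof (cases "j \<le> N")
    case True
    then show ?thesis unfolding m_def by (auto intro: min.coboundedI2 Min_le)
  next
    case False
    then show ?thesis unfolding m_def Eweight_def using N[of j] by auto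
  qed
  ultimately show ?thesis by blast
qed

lemma Espace_summable:
  assumes "u \<in> Espace eig e"
  shows "summable (\<lambda>j. \<bar>eig (Suc j)\<bar> * coef2 e u (Suc j))"
  using assms unfolding Espace_def by simp

lemma summable_weighted_coef2:
  assumes u: "u \<in> Espace eig e" and a_le: "\<And>j. \<bar>a j\<bar> \<le> \<bar>eig j\<bar>"
  shows "summable (\<lambda>j. a (Suc j) * coef2 e u (Suc j))"
proof (rule summable_comparison_test[OF _ Espace_summable[OF u]])
  have "\<bar>a (Suc j)\<bar> * coef2 e u (Suc j) \<le> \<bar>eig (Suc j)\<bar> * coef2 e u (Suc j)" for j
    using a_le coef2_nonneg[of "Suc j" u] by (intro mult_right_mono) auto
  then show "\<exists>N. \<forall>j\<ge>N.
      norm (a (Suc j) * coef2 e u (Suc j)) \<le> \<bar>eig (Suc j)\<bar> * coef2 e u (Suc j)"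
    using coef2_nonneg[of "Suc _" u] by (simp add: abs_mult)
qed

lemma summable_Eweight_coef2:
  assumes u: "u \<in> Espace eig e"
  shows "summable (\<lambda>j. Eweight (Suc j) * coef2 e u (Suc j))"
proof -
  have L2: "L2fun u" using u unfolding Espace_def by simp
  have "summable (\<lambda>j. \<bar>eig (Suc j)\<bar> * coef2 e u (Suc j) + coef2 e u (Suc j))"
    using Espace_summable[OF u] Parseval[OF L2] by (intro summable_add) (auto simp: sums_iff)
  then show ?thesis
    by (rule summable_comparison_test[rotated])
      (auto simp: Eweight_def coef2_nonneg distrib_right intro!: exI[of _ 0])
qed

lemma Enorm_nonneg: "u \<in> Espace eig e \<Longrightarrow> 0 \<le> Enorm eig e u"
  unfolding Enorm_def Eweight_def[symmetric]
  by (intro real_sqrt_ge_zero suminf_nonneg summable_Eweight_coef2)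
    (auto intro!: mult_nonneg_nonneg less_imp_le[OF Eweight_pos] coef2_nonneg)

lemma Enorm_sq_sums:
  assumes u: "u \<in> Espace eig e"
  shows "(\<lambda>j. Eweight (Suc j) * coef2 e u (Suc j)) sums (Enorm eig e u)\<^sup>2"
  using summable_Eweight_coef2[OF u] Enorm_nonneg[OF u]
  unfolding Enorm_def Eweight_def[symmetric] by (simp add: summable_sums)

lemma Eweight_coef2_le_Enorm:
  assumes u: "u \<in> Espace eig e" and "j \<ge> 1"
  shows "Eweight j * coef2 e u j \<le> (Enorm eig e u)\<^sup>2"
proof -
  have "(\<Sum>i\<in>{j - 1}. Eweight (Suc i) * coef2 e u (Suc i)) \<le> (\<Sum>i. Eweight (Suc i) * coef2 e u (Suc i))"
    using Enorm_sq_sums[OF u]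
    by (intro sum_le_suminf) (auto simp: sums_iff intro!: mult_nonneg_nonneg less_imp_le[OF Eweight_pos] coef2_nonneg)
  then show ?thesis
    using \<open>j \<ge> 1\<close> Enorm_sq_sums[OF u] by (simp add: sums_iff)
qed

lemma normsqL2_le_Enorm:
  assumes u: "u \<in> Espace eig e" and "0 < m"
    and m_le: "\<And>j. j \<ge> 1 \<Longrightarrow> coef2 e u j \<noteq> 0 \<Longrightarrow> m \<le> Eweight j"
  shows "normsqL2 u \<le> (Enorm eig e u)\<^sup>2 / m"
proof -
  have L2: "L2fun u" using u unfolding Espace_def by simp
  have "coef2 e u (Suc j) \<le> Eweight (Suc j) * coef2 e u (Suc j) / m" for j
  proof (cases "coef2 e u (Suc j) = 0")
    case False
    then have "m * coef2 e u (Suc j) \<le> Eweight (Suc j) * coef2 e u (Suc j)"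
      using m_le[of "Suc j"] coef2_nonneg[of "Suc j" u] by (intro mult_right_mono) auto
    then show ?thesis using \<open>0 < m\<close> by (simp add: field_simps)
  qed simp
  then show ?thesis
    using sums_le[OF _ Parseval[OF L2] sums_divide[OF Enorm_sq_sums[OF u]]] by simp
qed

lemma normsq_minus_le_Enorm:
  assumes u: "u \<in> Espace eig e"
  shows "normsq_minus eig e u \<le> (Enorm eig e u)\<^sup>2"
  unfolding normsq_minus_def using Enorm_sq_sums[OF u] coef2_nonneg
  by (intro sums_le[OF _ summable_sums[OF summable_weighted_coef2[OF u]]])
    (auto simp: Eweight_def intro: mult_right_mono)

lemma normsq_minus_nonneg:
  assumes u: "u \<in> Espace eig e"
  shows "0 \<le> normsq_minus eig e u"
  unfolding normsq_minus_def
  by (intro suminf_nonneg summable_weighted_coef2[OF u]) (auto intro!: mult_nonpos_nonneg coef2_nonneg)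

lemma normsq_plus_nonneg:
  assumes u: "u \<in> Espace eig e"
  shows "0 \<le> normsq_plus eig e u"
  unfolding normsq_plus_def
  by (intro suminf_nonneg summable_weighted_coef2[OF u]) (auto intro!: mult_nonneg_nonneg coef2_nonneg)

lemma integral_W_le:
  assumes "L2fun u"
  shows "(\<integral>t. W t (u t) \<partial>lebesgue) \<le> B * normsqL2 u"
proof (cases "integrable lebesgue (\<lambda>t. W t (u t))")
  case True
  then have "(\<integral>t. W t (u t) \<partial>lebesgue) \<le> (\<integral>t. B * (norm (u t))\<^sup>2 \<partial>lebesgue)"
    using assms by (intro integral_mono integrable_mult_right L2fun_integrable_normsq W_le)
  then show ?thesis by (simp add: normsqL2_def)
next
  case False
  then show ?thesis
    using B_nonneg normsqL2_nonneg[of u] by (simp add: not_integrable_integral_eq)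
qed

lemma Ifun_ge:
  assumes u: "u \<in> Espace eig e" and lam: "lam \<in> {1..2}"
  shows "normsq_plus eig e u / 2 - normsq_minus eig e u - 2 * B * normsqL2 u \<le> Ifun eig e W lam u"
proof -
  have L2: "L2fun u" using u unfolding Espace_def by simp
  have "0 \<le> (\<integral>t. W t (u t) \<partial>lebesgue)"
    by (intro integral_nonneg_AE) (simp add: W_nonneg)
  then have "lam * (normsq_minus eig e u / 2 + (\<integral>t. W t (u t) \<partial>lebesgue))
      \<le> 2 * (normsq_minus eig e u / 2 + B * normsqL2 u)"
    using lam integral_W_le[OF L2] normsq_minus_nonneg[OF u] by (intro mult_mono) auto
  then show ?thesis
    unfolding Ifun_def by (simp add: algebra_simps)
qed

lemma Espace_diff_span:
  assumes u: "u \<in> Espace eig e" and F: "finite F" "F \<subseteq> {1..}"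
  shows "(\<lambda>t. u t - (\<Sum>i\<in>F. c i *\<^sub>R e i t)) \<in> Espace eig e"
proof -
  let ?d = "\<lambda>t. u t - (\<Sum>i\<in>F. c i *\<^sub>R e i t)"
  have L2: "L2fun u" using u unfolding Espace_def by simp
  have "Suc j \<notin> F" if "Max (insert 0 F) \<le> j" for j
    using F(1) that Max_ge[of "insert 0 F"] by fastforce
  then have "\<forall>\<^sub>F j in sequentially.
      \<bar>eig (Suc j)\<bar> * coef2 e ?d (Suc j) = \<bar>eig (Suc j)\<bar> * coef2 e u (Suc j)"
    using coef2_diff_span[OF L2 F] by (intro eventually_sequentiallyI[of "Max (insert 0 F)"]) simp
  then show ?thesis
    using summable_cong Espace_summable[OF u] L2 F
    unfolding Espace_def by (fastforce intro: L2fun_diff L2fun_span)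
qed

lemma Zk_coef2_eq_0:
  assumes u: "u \<in> Zk eig e k" and j: "1 \<le> j" "j < k"
  shows "coef2 e u j = 0"
proof (rule ccontr)
  assume "coef2 e u j \<noteq> 0"
  then have pos: "0 < Eweight j * coef2 e u j"
    using coef2_nonneg[OF j(1), of u] Eweight_pos[of j] by simp
  obtain F c where F: "finite F" "F \<subseteq> {k..}"
    and close: "Enorm eig e (\<lambda>t. u t - (\<Sum>i\<in>F. c i *\<^sub>R e i t)) < sqrt (Eweight j * coef2 e u j)"
    using u real_sqrt_gt_zero[OF pos] unfolding Zk_def by blast
  define d where "d = (\<lambda>t. u t - (\<Sum>i\<in>F. c i *\<^sub>R e i t))"
  have F1: "F \<subseteq> {1..}" and "j \<notin> F"
    using F j by auto
  have u_E: "u \<in> Espace eig e" and u_L2: "L2fun u"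
    using u unfolding Zk_def Espace_def by auto
  have d_E: "d \<in> Espace eig e"
    unfolding d_def using u_E F(1) F1 by (rule Espace_diff_span)
  have "Eweight j * coef2 e u j = Eweight j * coef2 e d j"
    unfolding d_def using coef2_diff_span[OF u_L2 F(1) F1 j(1) \<open>j \<notin> F\<close>] by simp
  also have "\<dots> \<le> (Enorm eig e d)\<^sup>2"
    using d_E j(1) by (rule Eweight_coef2_le_Enorm)
  also have "\<dots> < (sqrt (Eweight j * coef2 e u j))\<^sup>2"
    using close Enorm_nonneg[OF d_E] unfolding d_def[symmetric] by (intro power_strict_mono) auto
  also have "\<dots> = Eweight j * coef2 e u j"
    using pos by simp
  finally show False by simp
qed

lemma Zk_energy_parts:
  assumes u: "u \<in> Zk eig e k" and k: "1 \<le> k" "0 < eig k"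
  shows "normsq_minus eig e u = 0"
    and "normsq_plus eig e u = (Enorm eig e u)\<^sup>2"
    and "normsqL2 u \<le> (Enorm eig e u)\<^sup>2 / eig k"
proof -
  have u_E: "u \<in> Espace eig e"
    using u unfolding Zk_def by simp
  have high: "eig k \<le> eig j" if "j \<ge> 1" "coef2 e u j \<noteq> 0" for j
    using Zk_coef2_eq_0[OF u] eig_mono[OF k(1)] that by fastforce
  have "(\<lambda>j. (if eig (Suc j) < 0 then - eig (Suc j) else 0) * coef2 e u (Suc j)) = (\<lambda>j. 0)"
    using high k(2) by fastforce
  then show "normsq_minus eig e u = 0"
    unfolding normsq_minus_def by simp
  have "(\<lambda>j. (if 0 < eig (Suc j) then eig (Suc j) else 0) * coef2 e u (Suc j))
      = (\<lambda>j. Eweight (Suc j) * coef2 e u (Suc j))"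
    using high k(2) by (fastforce simp: Eweight_def)
  then show "normsq_plus eig e u = (Enorm eig e u)\<^sup>2"
    unfolding normsq_plus_def using Enorm_sq_sums[OF u_E] by (simp add: sums_iff)
  show "normsqL2 u \<le> (Enorm eig e u)\<^sup>2 / eig k"
  proof (rule normsqL2_le_Enorm[OF u_E k(2)])
    fix j assume "j \<ge> 1" "coef2 e u j \<noteq> 0"
    then have "eig k \<le> eig j" by (rule high)
    then show "eig k \<le> Eweight j" using k(2) by (simp add: Eweight_def)
  qed
qed

lemma Ifun_lower_bound:
  assumes u: "u \<in> Espace eig e" and lam: "lam \<in> {1..2}"
    and m: "0 < m" "\<And>j. m \<le> Eweight j"
  shows "- (Enorm eig e u)\<^sup>2 * (1 + 2 * B / m) \<le> Ifun eig e W lam u"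
proof -
  have "2 * B * normsqL2 u \<le> 2 * B * ((Enorm eig e u)\<^sup>2 / m)"
    using normsqL2_le_Enorm[OF u m(1)] m(2) B_nonneg by (intro mult_left_mono) auto
  then show ?thesis
    using Ifun_ge[OF u lam] normsq_plus_nonneg[OF u] normsq_minus_le_Enorm[OF u]
    by (simp add: algebra_simps)
qed

lemma Ifun_lower_bound_Zk:
  assumes u: "u \<in> Zk eig e k" and lam: "lam \<in> {1..2}" and k: "1 \<le> k" "8 * B < eig k"
  shows "(Enorm eig e u)\<^sup>2 / 4 \<le> Ifun eig e W lam u"
proof -
  have u_E: "u \<in> Espace eig e"
    using u unfolding Zk_def by simp
  have eig_pos: "0 < eig k"
    using k(2) B_nonneg by simp
  have "2 * B * normsqL2 u \<le> 2 * B * ((Enorm eig e u)\<^sup>2 / eig k)"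
    using Zk_energy_parts(3)[OF u k(1) eig_pos] B_nonneg by (intro mult_left_mono) auto
  also have "\<dots> \<le> (Enorm eig e u)\<^sup>2 / 4"
  proof -
    have "8 * B * (Enorm eig e u)\<^sup>2 \<le> eig k * (Enorm eig e u)\<^sup>2"
      using k(2) by (intro mult_right_mono) auto
    then show ?thesis using eig_pos by (simp add: field_simps)
  qed
  finally show ?thesis
    using Ifun_ge[OF u_E lam] Zk_energy_parts(1,2)[OF u k(1) eig_pos] by simp
qed


lemma bk_lower_bound_tendsto_infinity:
  "\<exists>r bbar :: nat \<Rightarrow> real. (\<forall>k\<ge>1. r k > 0) \<and> filterlim bbar at_top sequentially \<and>
     (\<forall>k\<ge>1. \<forall>lam\<in>{1..2}. bk eig e W k (r k) lam \<ge> ereal (bbar k))"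
proof -
  obtain m where m: "0 < m" "\<And>j. m \<le> Eweight j"
    using Eweight_lower_bound by blast
  obtain K where K: "\<And>k. K \<le> k \<Longrightarrow> 8 * B < eig k"
    using eig_tendsto unfolding filterlim_at_top_dense eventually_sequentially by blast
  define r :: "nat \<Rightarrow> real" where "r k = real k + 1" for k
  define bbar where "bbar k = (if K \<le> k then (r k)\<^sup>2 / 4 else - (r k)\<^sup>2 * (1 + 2 * B / m))" for k
  have "filterlim bbar at_top sequentially"
  proof (rule filterlim_at_top_mono[OF filterlim_real_sequentially])
    have "real k \<le> (real k + 1)\<^sup>2 / 4" for k
      using zero_le_power2[of "real k - 1"] by (simp add: power2_eq_square algebra_simps)
    then show "\<forall>\<^sub>F k in sequentially. real k \<le> bbar k"
      unfolding bbar_def r_def by (intro eventually_sequentiallyI[of K]) simp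
  qed
  moreover have "ereal (bbar k) \<le> bk eig e W k (r k) lam"
    if k: "1 \<le> k" and lam: "lam \<in> {1..2}" for k lam
    unfolding bk_def
  proof (rule INF_greatest)
    fix u assume "u \<in> {u \<in> Zk eig e k. Enorm eig e u = r k}"
    then have u: "u \<in> Zk eig e k" and u_E: "u \<in> Espace eig e" and u_r: "Enorm eig e u = r k"
      by (auto simp: Zk_def)
    show "ereal (bbar k) \<le> ereal (Ifun eig e W lam u)"
      using Ifun_lower_bound_Zk[OF u lam k K] Ifun_lower_bound[OF u_E lam m] u_r
      by (cases "K \<le> k") (simp_all add: bbar_def)
  qed
  ultimately show ?thesis
    by (intro exI[of _ r] exI[of _ bbar]) (simp add: r_def)
qed

end

theorem lemma3p2:
  fixes L :: "real \<Rightarrow> real^'n^'n"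
    and W :: "real \<Rightarrow> real^'n \<Rightarrow> real"
    and gradW :: "real \<Rightarrow> real^'n \<Rightarrow> real^'n"
    and eig :: "nat \<Rightarrow> real"
    and e :: "nat \<Rightarrow> real \<Rightarrow> real^'n"
  assumes L_cont: "continuous_on UNIV L"
    and L_sym: "\<And>t. transpose (L t) = L t"
    and L1: "\<exists>\<alpha>>1. \<exists>M>0. ((\<lambda>R. emeasure lebesgue
               {t. \<bar>t\<bar> \<ge> R \<and> lmin L t \<le> M * \<bar>t\<bar> * (ln \<bar>t\<bar>) powr \<alpha>}) \<longlongrightarrow> 0) at_top"
    and L2: "\<exists>L0>0. \<forall>t x. (L t *v x) \<bullet> x \<ge> - L0 * (norm x)\<^sup>2"
    and spec: "spectral_basis L eig e"
    and W_C1: "\<exists>Wt. continuous_on UNIV (\<lambda>p. Wt (fst p) (snd p)) \<and>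
               continuous_on UNIV (\<lambda>p. gradW (fst p) (snd p)) \<and>
               (\<forall>t x. ((\<lambda>p. W (fst p) (snd p)) has_derivative
                   (\<lambda>(s, h). s * Wt t x + gradW t x \<bullet> h)) (at (t, x)))"
    and W1: "(\<forall>t. W t 0 = 0) \<and> (\<exists>b1. \<forall>t x. norm (gradW t x) \<le> b1 * norm x)"
    and W23: "\<exists>r1>0. (\<exists>b2>0. \<exists>\<mu>>1. \<forall>t x. norm x \<ge> r1 \<longrightarrow>
                  2 * W t x - gradW t x \<bullet> x \<ge> b2 * norm x powr \<mu>) \<and>
               (\<exists>b3>0. \<forall>t x. norm x < r1 \<longrightarrow> 2 * W t x - gradW t x \<bullet> x \<ge> - b3 * norm x)"
    and W4: "\<exists>r2>0. \<exists>\<sigma>0>0. \<forall>t x. norm x \<le> r2 \<longrightarrow>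
               \<bar>W t x\<bar> \<le> (eig (nbar eig + 1) - \<sigma>0) / 2 * (norm x)\<^sup>2"
    and W5: "\<exists>\<epsilon>0>0. \<exists>rinf>0. \<forall>t x. norm x \<ge> rinf \<longrightarrow>
               W t x \<ge> (eig (nbar eig + 1) / 2 + \<epsilon>0) * (norm x)\<^sup>2"
    and W6: "\<forall>t x. W t x \<ge> 0"
  shows "\<exists>r bbar :: nat \<Rightarrow> real. (\<forall>k\<ge>1. r k > 0) \<and> filterlim bbar at_top sequentially \<and>
           (\<forall>k\<ge>1. \<forall>lam\<in>{1..2}. bk eig e W k (r k) lam \<ge> ereal (bbar k))"
proof -
  obtain b1 where b1: "\<And>t x. norm (gradW t x) \<le> b1 * norm x"
    using W1 by blast
  obtain Wt where W_deriv: "\<And>t x. ((\<lambda>p. W (fst p) (snd p)) has_derivative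
      (\<lambda>(s, h). s * Wt t x + gradW t x \<bullet> h)) (at (t, x))"
    using W_C1 by blast
  have "(W t has_derivative (\<lambda>h. gradW t x \<bullet> h)) (at x)" for t x
    using has_derivative_partial_snd[OF W_deriv[of t x]] by simp
  then have W_le: "W t x \<le> \<bar>b1\<bar> * (norm x)\<^sup>2" for t x
    using W1 b1 by (intro potential_le_quadratic) auto
  interpret spectral_energy e eig W "\<bar>b1\<bar>"
    using spec W6 W_le unfolding spectral_basis_def eigenfun_def
    by unfold_locales auto
  show ?thesis
    by (rule bk_lower_bound_tendsto_infinity)
qed

end
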